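(* Let $\mathcal O$ be the suboperad of $\mathrm{CNCB}$ generated by $a:=T_{bbb}$ and $r:=T_{ubu}$. Then $\mathcal O$ admits the presentation with generators $a,r$ of arity $2$ and the single relation $$r\circ_1 r=r\circ_2 r.$$ That is, $\mathcal O$ is isomorphic, via the morphism sending the generators to $a$ and $r$, to the quotient of the free operad on two binary generators by the operadic congruence generated by this relation.
   Context: For $n\ge2$, a bicoloured noncrossing configuration (BNC) of size $n$ is a regular polygon with vertices $1,\dots,n+1$ clockwise, together with disjoint sets of blue and red arcs among the arcs $(i,j)$, $1\le i<j\le n+1$. The arcs $(i,i+1)$ are the edges ($i$th edge), $(1,n+1)$ is the base, and the others are diagonals. Coloured arcs are pairwise noncrossing ($(i,j),(k,l)$ cross iff $i<k<j<l$ or $k<i<l<j$), and red arcs are diagonals. There is one BNC of size $1$, a blue segment, which is the unit. The operad $\mathrm{CNCB}$ has the BNCs as elements (arity = size). Its composition $\mathfrak C\circ_i\mathfrak D$ ($\mathfrak C$ of size $n$, $\mathfrak D$ of size $m$) glues the base of $\mathfrak D$ on the $i$th edge of $\mathfrak C$. Arcs $(a,b)$ of $\mathfrak C$ become $(\sigma(a),\sigma(b))$ with $\sigma(v)=v$ for $v\le i$ and $v+m-1$ otherwise, and arcs $(a,b)$ of $\mathfrak D$ become $(a+i-1,b+i-1)$, keeping colours. The exception is the arc $(i,i+m)$, which is red if the $i$th edge of $\mathfrak C$ and the base of $\mathfrak D$ are both uncoloured, blue if both are blue, and uncoloured otherwise. For $x,y,z\in\{b,u\}$, $T_{xyz}$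 denotes the BNC of size $2$ (a triangle with vertices $1,2,3$) whose first edge $(1,2)$ has colour $x$, whose base $(1,3)$ has colour $y$, and whose second edge $(2,3)$ has colour $z$, where $b$ = blue and $u$ = uncoloured. The suboperad generated by a set is the smallest suboperad containing it. *)

theory Defs
  imports Main
begin

text \<open>A BNC of size n: polygon with vertices 1..n+1; arcs are pairs (i,j) with
  1 <= i < j <= n+1; blue and red arc sets.\<close>

record bnc =
  bsize :: nat
  blue :: "(nat \<times> nat) set"
  red  :: "(nat \<times> nat) set"

definition is_arc :: "nat \<Rightarrow> nat \<times> nat \<Rightarrow> bool" where
  "is_arc n e \<longleftrightarrow> 1 \<le> fst e \<and> fst e < snd e \<and> snd e \<le> n + 1"

definition is_edge :: "nat \<times> nat \<Rightarrow> bool" where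
  "is_edge e \<longleftrightarrow> snd e = fst e + 1"

definition is_base :: "nat \<Rightarrow> nat \<times> nat \<Rightarrow> bool" where
  "is_base n e \<longleftrightarrow> e = (1, n + 1)"

definition is_diagonal :: "nat \<Rightarrow> nat \<times> nat \<Rightarrow> bool" where
  "is_diagonal n e \<longleftrightarrow> is_arc n e \<and> \<not> is_edge e \<and> \<not> is_base n e"

definition crossing :: "nat \<times> nat \<Rightarrow> nat \<times> nat \<Rightarrow> bool" where
  "crossing e f \<longleftrightarrow>
     (case e of (i, j) \<Rightarrow> case f of (k, l) \<Rightarrow> (i < k \<and> k < j \<and> j < l) \<or> (k < i \<and> i < l \<and> l < j))"

definition bnc_unit :: bnc where
  "bnc_unit = \<lparr>bsize = 1, blue = {(1, 2)}, red = {}\<rparr>"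

definition is_bnc :: "bnc \<Rightarrow> bool" where
  "is_bnc C \<longleftrightarrow>
     C = bnc_unit \<or>
     (bsize C \<ge> 2 \<and>
      (\<forall>e \<in> blue C. is_arc (bsize C) e) \<and>
      (\<forall>e \<in> red C. is_diagonal (bsize C) e) \<and>
      blue C \<inter> red C = {} \<and>
      (\<forall>e \<in> blue C \<union> red C. \<forall>f \<in> blue C \<union> red C. \<not> crossing e f))"

text \<open>Partial composition C o_i D (glue base of D on the i-th edge of C).\<close>
definition bnc_comp :: "bnc \<Rightarrow> nat \<Rightarrow> bnc \<Rightarrow> bnc" where
  "bnc_comp C i D =
    (let n = bsize C; m = bsize D;
         \<sigma> = (\<lambda>v::nat. if v \<le> i then v else v + m - 1);
         sC = (\<lambda>(a, b). (\<sigma> a, \<sigma> b));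
         sD = (\<lambda>(a, b). (a + i - 1, b + i - 1));
         eC = (i, i + 1); bD = (1, m + 1);
         eC_blue = (eC \<in> blue C); bD_blue = (bD \<in> blue D);
         eC_unc = (eC \<notin> blue C \<and> eC \<notin> red C);
         bD_unc = (bD \<notin> blue D \<and> bD \<notin> red D)
     in \<lparr>bsize = n + m - 1,
         blue = sC ` (blue C - {eC}) \<union> sD ` (blue D - {bD})
                \<union> (if eC_blue \<and> bD_blue then {(i, i + m)} else {}),
         red = sC ` (red C - {eC}) \<union> sD ` (red D - {bD})
                \<union> (if eC_unc \<and> bD_unc then {(i, i + m)} else {})\<rparr>)"

text \<open>T_bbb and T_ubu (vertices 1,2,3; first edge (1,2), base (1,3), second edge (2,3)).\<close>
definition T_bbb :: bnc where
  "T_bbb = \<lparr>bsize = 2, blue = {(1, 2), (1, 3), (2, 3)}, red = {}\<rparr>"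

definition T_ubu :: bnc where
  "T_ubu = \<lparr>bsize = 2, blue = {(1, 3)}, red = {}\<rparr>"

inductive_set gen_sub :: "bnc set" where
  unit: "bnc_unit \<in> gen_sub"
| gen_a: "T_bbb \<in> gen_sub"
| gen_r: "T_ubu \<in> gen_sub"
| comp: "C \<in> gen_sub \<Longrightarrow> D \<in> gen_sub \<Longrightarrow> is_bnc C \<Longrightarrow> is_bnc D \<Longrightarrow>
         1 \<le> i \<Longrightarrow> i \<le> bsize C \<Longrightarrow> bnc_comp C i D \<in> gen_sub"

datatype gen = GA | GR

text \<open>Planar trees with internal binary nodes labelled by generators; Leaf = unit.\<close>
datatype ftree = Leaf | Node gen ftree ftree

fun arity :: "ftree \<Rightarrow> nat" where
  "arity Leaf = 1"
| "arity (Node g l r) = arity l + arity r"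

fun graft :: "ftree \<Rightarrow> nat \<Rightarrow> ftree \<Rightarrow> ftree" where
  "graft Leaf i s = (if i = 1 then s else Leaf)"
| "graft (Node g l r) i s =
     (if i \<le> arity l then Node g (graft l i s) r
      else Node g l (graft r (i - arity l) s))"

definition gtree :: "gen \<Rightarrow> ftree" where
  "gtree g = Node g Leaf Leaf"

inductive fcong :: "ftree \<Rightarrow> ftree \<Rightarrow> bool" where
  rel: "fcong (graft (gtree GR) 1 (gtree GR)) (graft (gtree GR) 2 (gtree GR))"
| refl: "fcong t t"
| sym: "fcong s t \<Longrightarrow> fcong t s"
| trans: "fcong s t \<Longrightarrow> fcong t u \<Longrightarrow> fcong s u"
| ctx_out: "fcong s t \<Longrightarrow> 1 \<le> i \<Longrightarrow> i \<le> arity u \<Longrightarrow> fcong (graft u i s) (graft u i t)"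
| ctx_in: "fcong s t \<Longrightarrow> 1 \<le> i \<Longrightarrow> i \<le> arity s \<Longrightarrow> i \<le> arity t \<Longrightarrow>
           fcong (graft s i u) (graft t i u)"

fun gen_bnc :: "gen \<Rightarrow> bnc" where
  "gen_bnc GA = T_bbb"
| "gen_bnc GR = T_ubu"

fun feval :: "ftree \<Rightarrow> bnc" where
  "feval Leaf = bnc_unit"
| "feval (Node g l r) = bnc_comp (bnc_comp (gen_bnc g) 2 (feval r)) 1 (feval l)"

end

theory Submission
  imports Defs
begin

text \<open>
  The configurations generated by \<open>a\<close> and \<open>r\<close> have no red arcs and a blue base, so
  on them composition in CNCB is a composition of blue arc sets alone. That composition satisfies
  the sequential and parallel associativity axioms of a nonsymmetric operad, hence the evaluation
  map of the free operad is a morphism and its image is the suboperad generated by \<open>a\<close> and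
  \<open>r\<close>; in particular every evaluated tree is a noncrossing configuration.

  The relation \<open>r \<circ>\<^sub>1 r = r \<circ>\<^sub>2 r\<close> holds in CNCB, so congruent trees
  evaluate equally. Conversely, orienting the relation shows that every tree is congruent to a
  normal one, in which no \<open>r\<close>-node has an \<open>r\<close>-node as left child, and a normal tree is
  recovered from its arcs: the arcs at the first and last vertex determine the root label and the
  arity of the left subtree (for an \<open>r\<close>-root, via the arcs of the \<open>a\<close>-node or leaf on its
  left), and the arcs of the two subtrees are restrictions of the arcs of the tree.
\<close>

section \<open>Composition of blue arc sets\<close>

text \<open>The relabelling \<open>\<sigma>\<close> of the outer vertices in \<open>C \<circ>\<^sub>i D\<close>, for \<open>D\<close> of size \<open>m\<close>.\<close>

definition lift :: "nat \<Rightarrow> nat \<Rightarrow> nat \<Rightarrow> nat" where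
  "lift i m v = (if v \<le> i then v else v + m - 1)"

text \<open>
  The blue arcs of \<open>C \<circ>\<^sub>i D\<close> when neither configuration has red arcs and the base
  \<open>(1, m + 1)\<close> of \<open>D\<close> is blue: the arc \<open>(i, i + m)\<close> is then blue exactly when the
  \<open>i\<close>-th edge of \<open>C\<close> is, and no red arc is created.
\<close>

definition comp_arcs :: "(nat \<times> nat) set \<Rightarrow> nat \<Rightarrow> nat \<Rightarrow> (nat \<times> nat) set \<Rightarrow> (nat \<times> nat) set" where
  "comp_arcs S i m T =
     (\<lambda>(a, b). (lift i m a, lift i m b)) ` (S - {(i, i + 1)})
     \<union> (\<lambda>(a, b). (a + i - 1, b + i - 1)) ` (T - {(1, m + 1)})
     \<union> (if (i, i + 1) \<in> S then {(i, i + m)} else {})"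

definition arcs_within :: "nat \<Rightarrow> (nat \<times> nat) set \<Rightarrow> bool" where
  "arcs_within n S \<longleftrightarrow> (\<forall>(a, b) \<in> S. 1 \<le> a \<and> a < b \<and> b \<le> n + 1)"

lemma comp_arcs_I_outer:
  "(a, b) \<in> S \<Longrightarrow> (a, b) \<noteq> (i, i + 1) \<Longrightarrow> (lift i m a, lift i m b) \<in> comp_arcs S i m T"
  unfolding comp_arcs_def by (rule UnI1, rule UnI1) (rule rev_image_eqI[of "(a, b)"], auto)

lemma comp_arcs_I_inner:
  "(a, b) \<in> T \<Longrightarrow> (a, b) \<noteq> (1, m + 1) \<Longrightarrow> (a + i - 1, b + i - 1) \<in> comp_arcs S i m T"
  unfolding comp_arcs_def by (rule UnI1, rule UnI2) (rule rev_image_eqI[of "(a, b)"], auto)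

lemma comp_arcs_I_new: "(i, i + 1) \<in> S \<Longrightarrow> (i, i + m) \<in> comp_arcs S i m T"
  unfolding comp_arcs_def by auto

lemma comp_arcs_E:
  assumes "(x, y) \<in> comp_arcs S i m T"
  obtains (outer) a b where "(a, b) \<in> S" "(a, b) \<noteq> (i, i + 1)" "x = lift i m a" "y = lift i m b"
  | (inner) a b where "(a, b) \<in> T" "(a, b) \<noteq> (1, m + 1)" "x = a + i - 1" "y = b + i - 1"
  | (new) "(i, i + 1) \<in> S" "x = i" "y = i + m"
  using assms unfolding comp_arcs_def by (auto split: if_splits)

lemma arcs_withinD: "arcs_within n S \<Longrightarrow> (a, b) \<in> S \<Longrightarrow> 1 \<le> a \<and> a < b \<and> b \<le> n + 1"
  unfolding arcs_within_def by auto

lemma lift_lift_nested: "1 \<le> j \<Longrightarrow> j \<le> m \<Longrightarrow> 1 \<le> k \<Longrightarrow>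
    lift (i + j - 1) k (lift i m v) = lift i (m + k - 1) v"
  by (auto simp: lift_def)

lemma lift_shift: "1 \<le> i \<Longrightarrow> 1 \<le> v \<Longrightarrow> 1 \<le> k \<Longrightarrow> lift (i + j - 1) k (v + i - 1) = lift j k v + i - 1"
  by (auto simp: lift_def)

lemma lift_pair_neq_edge:
  assumes "1 \<le> j" "j \<le> m" "(c, d) \<noteq> (i, i + 1)"
  shows "(lift i m c, lift i m d) \<noteq> (i + j - 1, i + j - 1 + 1)"
proof
  assume eq: "(lift i m c, lift i m d) = (i + j - 1, i + j - 1 + 1)"
  then have "c \<le> i" using assms(1,2) by (auto simp: lift_def split: if_splits)
  then have "c = i" "j = 1" using eq assms(1) by (auto simp: lift_def)
  then have "d \<noteq> i + 1" using assms(3) by auto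
  then show False using eq \<open>j = 1\<close> assms(2) by (auto simp: lift_def split: if_splits)
qed

lemma comp_arcs_assoc_seq_subset_outer:
  assumes i: "1 \<le> i" and j: "1 \<le> j" "j \<le> m" and k: "1 \<le> k" and T: "arcs_within m T"
    and ab: "(a, b) \<in> comp_arcs S i m T" "(a, b) \<noteq> (i + j - 1, i + j - 1 + 1)"
  shows "(lift (i + j - 1) k a, lift (i + j - 1) k b)
         \<in> comp_arcs S i (m + k - 1) (comp_arcs T j k U)"
  using ab(1)
proof (cases rule: comp_arcs_E)
  case (outer c d)
  have "lift (i + j - 1) k a = lift i (m + k - 1) c" "lift (i + j - 1) k b = lift i (m + k - 1) d"
    using outer(3,4) lift_lift_nested[OF j k] by simp_all
  then show ?thesis using comp_arcs_I_outer[OF outer(1,2)] by simp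
next
  case (inner c d)
  have cd: "1 \<le> c" "c < d" "d \<le> m + 1" using arcs_withinD[OF T inner(1)] by auto
  have "(lift j k c, lift j k d) \<in> comp_arcs T j k U"
    using inner ab(2) i by (intro comp_arcs_I_outer) auto
  moreover have "(lift j k c, lift j k d) \<noteq> (1, m + k - 1 + 1)"
    using inner(2) cd j k by (auto simp: lift_def)
  ultimately have "(lift j k c + i - 1, lift j k d + i - 1)
           \<in> comp_arcs S i (m + k - 1) (comp_arcs T j k U)"
    by (rule comp_arcs_I_inner)
  moreover have "lift (i + j - 1) k a = lift j k c + i - 1"
    "lift (i + j - 1) k b = lift j k d + i - 1"
    using inner(3,4) lift_shift[OF i _ k] cd by simp_all
  ultimately show ?thesis by simp
next
  case new
  have "lift (i + j - 1) k a = i" "lift (i + j - 1) k b = i + (m + k - 1)"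
    using new(2,3) j k by (auto simp: lift_def)
  then show ?thesis using comp_arcs_I_new[OF new(1)] by simp
qed

lemma comp_arcs_assoc_seq_subset_new:
  assumes i: "1 \<le> i" and j: "1 \<le> j" "j \<le> m" and k: "1 \<le> k"
    and edge: "(i + j - 1, i + j - 1 + 1) \<in> comp_arcs S i m T"
  shows "(i + j - 1, i + j - 1 + k) \<in> comp_arcs S i (m + k - 1) (comp_arcs T j k U)"
  using edge
proof (cases rule: comp_arcs_E)
  case (outer c d)
  then show ?thesis using lift_pair_neq_edge[OF j outer(2)] by simp
next
  case (inner c d)
  have cd: "c = j" "d = j + 1" using inner(3,4) i j by auto
  have "(j, j + k) \<in> comp_arcs T j k U"
    using inner(1) cd by (intro comp_arcs_I_new) simp
  moreover have "(j, j + k) \<noteq> (1, m + k - 1 + 1)" using inner(2) cd j k by auto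
  moreover have "i + j - 1 = j + i - 1" "i + j - 1 + k = (j + k) + i - 1" using i j by auto
  ultimately show ?thesis using comp_arcs_I_inner by metis
next
  case new
  then show ?thesis using comp_arcs_I_new[OF new(1), of "m + k - 1"] by simp
qed

lemma comp_arcs_assoc_seq_subset:
  assumes i: "1 \<le> i" and j: "1 \<le> j" "j \<le> m" and k: "1 \<le> k"
    and T: "arcs_within m T" and U: "arcs_within k U"
  shows "comp_arcs (comp_arcs S i m T) (i + j - 1) k U
         \<subseteq> comp_arcs S i (m + k - 1) (comp_arcs T j k U)"
proof (rule subrelI)
  fix x y
  assume "(x, y) \<in> comp_arcs (comp_arcs S i m T) (i + j - 1) k U"
  then show "(x, y) \<in> comp_arcs S i (m + k - 1) (comp_arcs T j k U)"
  proof (cases rule: comp_arcs_E)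
    case (outer a b)
    have "(lift (i + j - 1) k a, lift (i + j - 1) k b)
           \<in> comp_arcs S i (m + k - 1) (comp_arcs T j k U)"
      by (rule comp_arcs_assoc_seq_subset_outer[OF i j k T outer(1,2)])
    then show ?thesis using outer(3,4) by simp
  next
    case (inner a b)
    have ab: "1 \<le> a" "a < b" "b \<le> k + 1" using arcs_withinD[OF U inner(1)] by auto
    have "(a + j - 1, b + j - 1) \<in> comp_arcs T j k U"
      using inner by (intro comp_arcs_I_inner) auto
    moreover have "(a + j - 1, b + j - 1) \<noteq> (1, m + k - 1 + 1)"
      using inner(2) ab j by auto
    moreover have "x = (a + j - 1) + i - 1" "y = (b + j - 1) + i - 1"
      using inner(3,4) ab i j by auto
    ultimately show ?thesis using comp_arcs_I_inner by metis
  next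
    case new
    have "(i + j - 1, i + j - 1 + k) \<in> comp_arcs S i (m + k - 1) (comp_arcs T j k U)"
      by (rule comp_arcs_assoc_seq_subset_new[OF i j k new(1)])
    then show ?thesis using new(2,3) by simp
  qed
qed

lemma comp_arcs_assoc_seq_supset_inner:
  assumes i: "1 \<le> i" and j: "1 \<le> j" "j \<le> m" and k: "1 \<le> k" and T: "arcs_within m T"
    and cd: "(c, d) \<in> comp_arcs T j k U" "(c, d) \<noteq> (1, m + k - 1 + 1)"
  shows "(c + i - 1, d + i - 1) \<in> comp_arcs (comp_arcs S i m T) (i + j - 1) k U"
  using cd(1)
proof (cases rule: comp_arcs_E)
  case (outer e f)
  have ef: "1 \<le> e" "e < f" "f \<le> m + 1" using arcs_withinD[OF T outer(1)] by auto
  have "(e, f) \<noteq> (1, m + 1)" using cd(2) outer(3,4) j k by (auto simp: lift_def)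
  with outer(1) have "(e + i - 1, f + i - 1) \<in> comp_arcs S i m T"
    by (rule comp_arcs_I_inner)
  moreover have "(e + i - 1, f + i - 1) \<noteq> (i + j - 1, i + j - 1 + 1)" using outer(2) i by auto
  ultimately have "(lift (i + j - 1) k (e + i - 1), lift (i + j - 1) k (f + i - 1))
                   \<in> comp_arcs (comp_arcs S i m T) (i + j - 1) k U"
    by (rule comp_arcs_I_outer)
  then show ?thesis using outer(3,4) ef lift_shift[OF i _ k] by simp
next
  case (inner e f)
  have "(e + (i + j - 1) - 1, f + (i + j - 1) - 1) \<in> comp_arcs (comp_arcs S i m T) (i + j - 1) k U"
    using inner(1,2) by (rule comp_arcs_I_inner)
  then show ?thesis using inner(3,4) i j by (simp add: algebra_simps)
next
  case new
  have "(j, j + 1) \<noteq> (1, m + 1)" using cd(2) new(2,3) k by auto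
  with new(1) have "(j + i - 1, j + 1 + i - 1) \<in> comp_arcs S i m T"
    by (rule comp_arcs_I_inner)
  then have "(i + j - 1, i + j - 1 + 1) \<in> comp_arcs S i m T" using i j by (simp add: algebra_simps)
  then have "(i + j - 1, i + j - 1 + k) \<in> comp_arcs (comp_arcs S i m T) (i + j - 1) k U"
    by (rule comp_arcs_I_new)
  then show ?thesis using new(2,3) i j by (simp add: algebra_simps)
qed

lemma comp_arcs_assoc_seq_supset:
  assumes i: "1 \<le> i" and j: "1 \<le> j" "j \<le> m" and k: "1 \<le> k" and T: "arcs_within m T"
  shows "comp_arcs S i (m + k - 1) (comp_arcs T j k U)
         \<subseteq> comp_arcs (comp_arcs S i m T) (i + j - 1) k U"
proof (rule subrelI)
  fix x y
  assume "(x, y) \<in> comp_arcs S i (m + k - 1) (comp_arcs T j k U)"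
  then show "(x, y) \<in> comp_arcs (comp_arcs S i m T) (i + j - 1) k U"
  proof (cases rule: comp_arcs_E)
    case (outer c d)
    have "(lift i m c, lift i m d) \<in> comp_arcs S i m T"
      using outer(1,2) by (rule comp_arcs_I_outer)
    then have "(lift (i + j - 1) k (lift i m c), lift (i + j - 1) k (lift i m d))
               \<in> comp_arcs (comp_arcs S i m T) (i + j - 1) k U"
      using lift_pair_neq_edge[OF j outer(2)] by (rule comp_arcs_I_outer)
    then show ?thesis using outer(3,4) lift_lift_nested[OF j k] by simp
  next
    case (inner c d)
    have "(c + i - 1, d + i - 1) \<in> comp_arcs (comp_arcs S i m T) (i + j - 1) k U"
      by (rule comp_arcs_assoc_seq_supset_inner[OF i j k T inner(1,2)])
    then show ?thesis using inner(3,4) by simp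
  next
    case new
    have edge: "(i, i + m) \<in> comp_arcs S i m T" using new(1) by (rule comp_arcs_I_new)
    show ?thesis
    proof (cases "(i, i + m) = (i + j - 1, i + j - 1 + 1)")
      case True
      then have "j = 1" "m = 1" using i by auto
      then show ?thesis
        using comp_arcs_I_new[of "i + j - 1" "comp_arcs S i m T" k U] edge new(2,3) by simp
    next
      case False
      with edge have "(lift (i + j - 1) k i, lift (i + j - 1) k (i + m))
                      \<in> comp_arcs (comp_arcs S i m T) (i + j - 1) k U"
        by (rule comp_arcs_I_outer)
      moreover have "lift (i + j - 1) k i = i" "lift (i + j - 1) k (i + m) = i + (m + k - 1)"
        using j k by (auto simp: lift_def)
      ultimately show ?thesis using new(2,3) by simp
    qed
  qed
qed

lemma lift_lift_disjoint:
  "a < b \<Longrightarrow> 1 \<le> m \<Longrightarrow> 1 \<le> k \<Longrightarrow> lift (b + m - 1) k (lift a m v) = lift a m (lift b k v)"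
  by (auto simp: lift_def)

lemma lift_pair_eq_edge_below:
  "e < i \<Longrightarrow> 1 \<le> m \<Longrightarrow> (lift i m c, lift i m d) = (e, e + 1) \<longleftrightarrow> (c, d) = (e, e + 1)"
  by (auto simp: lift_def)

lemma lift_pair_eq_edge_above:
  "i < e \<Longrightarrow> 1 \<le> m \<Longrightarrow>
   (lift i m c, lift i m d) = (e + m - 1, e + m - 1 + 1) \<longleftrightarrow> (c, d) = (e, e + 1)"
  by (auto simp: lift_def)

lemma comp_arcs_assoc_par_subset_outer:
  assumes ab: "a < b" and m: "1 \<le> m" and k: "1 \<le> k" and A: "arcs_within m A"
    and pq: "(p, q) \<in> comp_arcs S a m A" "(p, q) \<noteq> (b + m - 1, b + m - 1 + 1)"
  shows "(lift (b + m - 1) k p, lift (b + m - 1) k q) \<in> comp_arcs (comp_arcs S b k B) a m A"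
  using pq(1)
proof (cases rule: comp_arcs_E)
  case (outer c d)
  have "(c, d) \<noteq> (b, b + 1)" using pq(2) outer(3,4) lift_pair_eq_edge_above[OF ab m] by auto
  with outer(1) have "(lift b k c, lift b k d) \<in> comp_arcs S b k B" by (rule comp_arcs_I_outer)
  moreover have "(lift b k c, lift b k d) \<noteq> (a, a + 1)"
    using outer(2) lift_pair_eq_edge_below[OF ab k] by auto
  ultimately have "(lift a m (lift b k c), lift a m (lift b k d))
           \<in> comp_arcs (comp_arcs S b k B) a m A"
    by (rule comp_arcs_I_outer)
  then show ?thesis using outer(3,4) lift_lift_disjoint[OF ab m k] by simp
next
  case (inner c d)
  have "(c + a - 1, d + a - 1) \<in> comp_arcs (comp_arcs S b k B) a m A"
    using inner(1,2) by (rule comp_arcs_I_inner)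
  moreover have "lift (b + m - 1) k p = c + a - 1" "lift (b + m - 1) k q = d + a - 1"
    using inner(3,4) arcs_withinD[OF A inner(1)] ab by (auto simp: lift_def)
  ultimately show ?thesis by simp
next
  case new
  have "(lift b k a, lift b k (a + 1)) \<in> comp_arcs S b k B"
    using new(1) ab by (intro comp_arcs_I_outer) auto
  then have "(a, a + 1) \<in> comp_arcs S b k B" using ab by (simp add: lift_def)
  then have "(a, a + m) \<in> comp_arcs (comp_arcs S b k B) a m A" by (rule comp_arcs_I_new)
  moreover have "lift (b + m - 1) k p = a" "lift (b + m - 1) k q = a + m"
    using new(2,3) ab m by (auto simp: lift_def)
  ultimately show ?thesis by simp
qed

lemma comp_arcs_assoc_par_subset_new:
  assumes ab: "a < b" and m: "1 \<le> m" and k: "1 \<le> k" and A: "arcs_within m A"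
    and edge: "(b + m - 1, b + m - 1 + 1) \<in> comp_arcs S a m A"
  shows "(b + m - 1, b + m - 1 + k) \<in> comp_arcs (comp_arcs S b k B) a m A"
  using edge
proof (cases rule: comp_arcs_E)
  case (outer c d)
  then have "(lift a m c, lift a m d) = (b + m - 1, b + m - 1 + 1)" by simp
  then have cd: "(c, d) = (b, b + 1)" using lift_pair_eq_edge_above[OF ab m] by blast
  have "(b, b + k) \<in> comp_arcs S b k B" using outer(1) cd by (intro comp_arcs_I_new) simp
  moreover have "(b, b + k) \<noteq> (a, a + 1)" using ab by simp
  ultimately have "(lift a m b, lift a m (b + k)) \<in> comp_arcs (comp_arcs S b k B) a m A"
    by (rule comp_arcs_I_outer)
  then show ?thesis using ab m k by (simp add: lift_def add_ac)
next
  case (inner c d)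
  then show ?thesis using arcs_withinD[OF A inner(1)] ab by auto
next
  case new
  then show ?thesis using ab by auto
qed

lemma comp_arcs_assoc_par_subset:
  assumes ab: "a < b" and m: "1 \<le> m" and k: "1 \<le> k"
    and A: "arcs_within m A" and B: "arcs_within k B"
  shows "comp_arcs (comp_arcs S a m A) (b + m - 1) k B
         \<subseteq> comp_arcs (comp_arcs S b k B) a m A"
proof (rule subrelI)
  fix x y
  assume "(x, y) \<in> comp_arcs (comp_arcs S a m A) (b + m - 1) k B"
  then show "(x, y) \<in> comp_arcs (comp_arcs S b k B) a m A"
  proof (cases rule: comp_arcs_E)
    case (outer p q)
    have "(lift (b + m - 1) k p, lift (b + m - 1) k q) \<in> comp_arcs (comp_arcs S b k B) a m A"
      by (rule comp_arcs_assoc_par_subset_outer[OF ab m k A outer(1,2)])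
    then show ?thesis using outer(3,4) by simp
  next
    case (inner c d)
    have c: "1 \<le> c" using arcs_withinD[OF B inner(1)] by auto
    have "(c + b - 1, d + b - 1) \<in> comp_arcs S b k B" using inner(1,2) by (rule comp_arcs_I_inner)
    moreover have "(c + b - 1, d + b - 1) \<noteq> (a, a + 1)" using c ab by auto
    ultimately have "(lift a m (c + b - 1), lift a m (d + b - 1))
             \<in> comp_arcs (comp_arcs S b k B) a m A"
      by (rule comp_arcs_I_outer)
    moreover have "lift a m (c + b - 1) = x" "lift a m (d + b - 1) = y"
      using inner(3,4) arcs_withinD[OF B inner(1)] ab by (auto simp: lift_def)
    ultimately show ?thesis by simp
  next
    case new
    have "(b + m - 1, b + m - 1 + k) \<in> comp_arcs (comp_arcs S b k B) a m A"
      by (rule comp_arcs_assoc_par_subset_new[OF ab m k A new(1)])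
    then show ?thesis using new(2,3) by simp
  qed
qed

lemma comp_arcs_assoc_par_supset_outer:
  assumes ab: "a < b" and m: "1 \<le> m" and k: "1 \<le> k" and B: "arcs_within k B"
    and pq: "(p, q) \<in> comp_arcs S b k B" "(p, q) \<noteq> (a, a + 1)"
  shows "(lift a m p, lift a m q) \<in> comp_arcs (comp_arcs S a m A) (b + m - 1) k B"
  using pq(1)
proof (cases rule: comp_arcs_E)
  case (outer c d)
  have "(c, d) \<noteq> (a, a + 1)" using pq(2) outer(3,4) lift_pair_eq_edge_below[OF ab k] by auto
  with outer(1) have "(lift a m c, lift a m d) \<in> comp_arcs S a m A" by (rule comp_arcs_I_outer)
  moreover have "(lift a m c, lift a m d) \<noteq> (b + m - 1, b + m - 1 + 1)"
    using outer(2) lift_pair_eq_edge_above[OF ab m] by auto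
  ultimately have "(lift (b + m - 1) k (lift a m c), lift (b + m - 1) k (lift a m d))
                   \<in> comp_arcs (comp_arcs S a m A) (b + m - 1) k B"
    by (rule comp_arcs_I_outer)
  then show ?thesis using outer(3,4) lift_lift_disjoint[OF ab m k] by simp
next
  case (inner c d)
  have "(c + (b + m - 1) - 1, d + (b + m - 1) - 1) \<in> comp_arcs (comp_arcs S a m A) (b + m - 1) k B"
    using inner(1,2) by (rule comp_arcs_I_inner)
  moreover have "lift a m p = c + (b + m - 1) - 1" "lift a m q = d + (b + m - 1) - 1"
    using inner(3,4) arcs_withinD[OF B inner(1)] ab by (auto simp: lift_def)
  ultimately show ?thesis by simp
next
  case new
  have "(lift a m b, lift a m (b + 1)) \<in> comp_arcs S a m A"
    using new(1) ab by (intro comp_arcs_I_outer) auto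
  then have "(b + m - 1, b + m - 1 + 1) \<in> comp_arcs S a m A" using ab m by (auto simp: lift_def)
  then have "(b + m - 1, b + m - 1 + k) \<in> comp_arcs (comp_arcs S a m A) (b + m - 1) k B"
    by (rule comp_arcs_I_new)
  moreover have "lift a m p = b + m - 1" "lift a m q = b + m - 1 + k"
    using new(2,3) ab m by (auto simp: lift_def)
  ultimately show ?thesis by simp
qed

lemma comp_arcs_assoc_par_supset_new:
  assumes ab: "a < b" and m: "1 \<le> m" and k: "1 \<le> k" and B: "arcs_within k B"
    and edge: "(a, a + 1) \<in> comp_arcs S b k B"
  shows "(a, a + m) \<in> comp_arcs (comp_arcs S a m A) (b + m - 1) k B"
  using edge
proof (cases rule: comp_arcs_E)
  case (outer c d)
  then have "(lift b k c, lift b k d) = (a, a + 1)" by simp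
  then have cd: "(c, d) = (a, a + 1)" using lift_pair_eq_edge_below[OF ab k] by blast
  have "(a, a + m) \<in> comp_arcs S a m A" using outer(1) cd by (intro comp_arcs_I_new) simp
  moreover have "(a, a + m) \<noteq> (b + m - 1, b + m - 1 + 1)" using ab by simp
  ultimately have "(lift (b + m - 1) k a, lift (b + m - 1) k (a + m))
                   \<in> comp_arcs (comp_arcs S a m A) (b + m - 1) k B"
    by (rule comp_arcs_I_outer)
  moreover have "lift (b + m - 1) k a = a" "lift (b + m - 1) k (a + m) = a + m"
    using ab m by (auto simp: lift_def)
  ultimately show ?thesis by simp
next
  case (inner c d)
  then show ?thesis using arcs_withinD[OF B inner(1)] ab by auto
next
  case new
  then show ?thesis using ab by auto
qed

lemma comp_arcs_assoc_par_supset: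
  assumes ab: "a < b" and m: "1 \<le> m" and k: "1 \<le> k"
    and A: "arcs_within m A" and B: "arcs_within k B"
  shows "comp_arcs (comp_arcs S b k B) a m A
         \<subseteq> comp_arcs (comp_arcs S a m A) (b + m - 1) k B"
proof (rule subrelI)
  fix x y
  assume "(x, y) \<in> comp_arcs (comp_arcs S b k B) a m A"
  then show "(x, y) \<in> comp_arcs (comp_arcs S a m A) (b + m - 1) k B"
  proof (cases rule: comp_arcs_E)
    case (outer p q)
    have "(lift a m p, lift a m q) \<in> comp_arcs (comp_arcs S a m A) (b + m - 1) k B"
      by (rule comp_arcs_assoc_par_supset_outer[OF ab m k B outer(1,2)])
    then show ?thesis using outer(3,4) by simp
  next
    case (inner c d)
    have cd: "1 \<le> c" "c < d" "d \<le> m + 1" using arcs_withinD[OF A inner(1)] by auto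
    have "(c + a - 1, d + a - 1) \<in> comp_arcs S a m A" using inner(1,2) by (rule comp_arcs_I_inner)
    moreover have "(c + a - 1, d + a - 1) \<noteq> (b + m - 1, b + m - 1 + 1)" using cd ab by auto
    ultimately have "(lift (b + m - 1) k (c + a - 1), lift (b + m - 1) k (d + a - 1))
                     \<in> comp_arcs (comp_arcs S a m A) (b + m - 1) k B"
      by (rule comp_arcs_I_outer)
    moreover have "lift (b + m - 1) k (c + a - 1) = x" "lift (b + m - 1) k (d + a - 1) = y"
      using inner(3,4) cd ab by (auto simp: lift_def)
    ultimately show ?thesis by simp
  next
    case new
    have "(a, a + m) \<in> comp_arcs (comp_arcs S a m A) (b + m - 1) k B"
      by (rule comp_arcs_assoc_par_supset_new[OF ab m k B new(1)])
    then show ?thesis using new(2,3) by simp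
  qed
qed

lemma comp_arcs_assoc_seq:
  assumes "1 \<le> i" "1 \<le> j" "j \<le> m" "1 \<le> k" "arcs_within m T" "arcs_within k U"
  shows "comp_arcs (comp_arcs S i m T) (i + j - 1) k U
         = comp_arcs S i (m + k - 1) (comp_arcs T j k U)"
  using comp_arcs_assoc_seq_subset[OF assms]
    comp_arcs_assoc_seq_supset[OF assms(1-5)] by (rule equalityI)

lemma comp_arcs_assoc_par:
  assumes "a < b" "1 \<le> m" "1 \<le> k" "arcs_within m A" "arcs_within k B"
  shows "comp_arcs (comp_arcs S a m A) (b + m - 1) k B = comp_arcs (comp_arcs S b k B) a m A"
  using comp_arcs_assoc_par_subset[OF assms]
    comp_arcs_assoc_par_supset[OF assms] by (rule equalityI)

lemma arcs_within_comp_arcs: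
  assumes "arcs_within n S" "arcs_within m T" "1 \<le> i" "i \<le> n" "1 \<le> m"
  shows "arcs_within (n + m - 1) (comp_arcs S i m T)"
  unfolding arcs_within_def
proof (intro ballI, clarify)
  fix x y assume "(x, y) \<in> comp_arcs S i m T"
  then show "1 \<le> x \<and> x < y \<and> y \<le> n + m - 1 + 1"
    by (cases rule: comp_arcs_E) (use assms in \<open>auto simp: lift_def dest: arcs_withinD\<close>)
qed

lemma comp_arcs_unit_left:
  assumes "(1, m + 1) \<in> T"
  shows "comp_arcs {(1, 2)} 1 m T = T"
  using assms by (auto simp: comp_arcs_def)

lemma comp_arcs_unit_right: "comp_arcs S i 1 {(1, 2)} = S"
proof -
  have "(\<lambda>(a, b). (lift i 1 a, lift i 1 b)) = id" by (auto simp: lift_def)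
  then show ?thesis by (auto simp: comp_arcs_def)
qed

definition blue_bnc :: "nat \<Rightarrow> (nat \<times> nat) set \<Rightarrow> bnc" where
  "blue_bnc n B = \<lparr>bsize = n, blue = B, red = {}\<rparr>"

lemma bnc_comp_blue_bnc:
  "(1, m + 1) \<in> T \<Longrightarrow>
    bnc_comp (blue_bnc n S) i (blue_bnc m T) = blue_bnc (n + m - 1) (comp_arcs S i m T)"
  unfolding bnc_comp_def blue_bnc_def comp_arcs_def lift_def Let_def by (simp cong: if_cong)

section \<open>Arc sets of trees\<close>

lemma arity_pos [simp]: "0 < arity t"
  by (induction t) auto

lemma arity_ge_1: "1 \<le> arity t"
  by (simp add: Suc_le_eq)

lemma arity_graft: "1 \<le> i \<Longrightarrow> i \<le> arity s \<Longrightarrow> arity (graft s i t) = arity s + arity t - 1"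
  by (induction s arbitrary: i) (use arity_ge_1 in auto)

fun gen_arcs :: "gen \<Rightarrow> (nat \<times> nat) set" where
  "gen_arcs GA = {(1, 2), (1, 3), (2, 3)}"
| "gen_arcs GR = {(1, 3)}"

lemma gen_bnc_eq_blue_bnc: "gen_bnc g = blue_bnc 2 (gen_arcs g)"
  by (cases g) (simp_all add: blue_bnc_def T_bbb_def T_ubu_def)

fun tree_arcs :: "ftree \<Rightarrow> (nat \<times> nat) set" where
  "tree_arcs Leaf = {(1, 2)}"
| "tree_arcs (Node g l r) =
     comp_arcs (comp_arcs (gen_arcs g) 2 (arity r) (tree_arcs r)) 1 (arity l) (tree_arcs l)"

lemma arcs_within_gen_arcs: "arcs_within 2 (gen_arcs g)"
  by (cases g) (auto simp: arcs_within_def)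

lemma arcs_within_tree_arcs: "arcs_within (arity t) (tree_arcs t)"
proof (induction t)
  case Leaf then show ?case by (simp add: arcs_within_def)
next
  case (Node g l r)
  have "arcs_within (2 + arity r - 1) (comp_arcs (gen_arcs g) 2 (arity r) (tree_arcs r))"
    by (rule arcs_within_comp_arcs[OF arcs_within_gen_arcs Node.IH(2)]) (simp_all add: Suc_le_eq)
  from arcs_within_comp_arcs[OF this Node.IH(1)] show ?case
    using arity_ge_1[of l] arity_ge_1[of r] by (simp add: add.commute)
qed

lemma tree_arcs_base: "(1, arity t + 1) \<in> tree_arcs t"
proof (cases t)
  case (Node g l r)
  have "(1, 3) \<in> gen_arcs g" by (cases g) auto
  then have "(lift 2 (arity r) 1, lift 2 (arity r) 3)
         \<in> comp_arcs (gen_arcs g) 2 (arity r) (tree_arcs r)"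
    by (rule comp_arcs_I_outer) simp
  then have "(1, arity r + 2) \<in> comp_arcs (gen_arcs g) 2 (arity r) (tree_arcs r)"
    by (simp add: lift_def)
  then have "(lift 1 (arity l) 1, lift 1 (arity l) (arity r + 2)) \<in> tree_arcs t"
    unfolding Node tree_arcs.simps by (rule comp_arcs_I_outer) simp
  then show ?thesis using Node by (simp add: lift_def add.commute)
qed simp

lemma feval_eq_blue_bnc: "feval t = blue_bnc (arity t) (tree_arcs t)"
proof (induction t)
  case Leaf then show ?case by (simp add: bnc_unit_def blue_bnc_def)
next
  case (Node g l r)
  have "feval (Node g l r) = bnc_comp (bnc_comp (blue_bnc 2 (gen_arcs g)) 2
      (blue_bnc (arity r) (tree_arcs r))) 1 (blue_bnc (arity l) (tree_arcs l))"
    using Node.IH by (simp add: gen_bnc_eq_blue_bnc)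
  also have "\<dots> = blue_bnc (2 + arity r - 1 + arity l - 1) (tree_arcs (Node g l r))"
    by (simp only: bnc_comp_blue_bnc tree_arcs_base tree_arcs.simps)
  finally show ?case by (simp add: add.commute)
qed

lemma tree_arcs_graft:
  "1 \<le> i \<Longrightarrow> i \<le> arity s \<Longrightarrow>
    tree_arcs (graft s i t) = comp_arcs (tree_arcs s) i (arity t) (tree_arcs t)"
proof (induction s arbitrary: i)
  case Leaf
  then show ?case using comp_arcs_unit_left[OF tree_arcs_base] by simp
next
  case (Node g l r)
  define X where "X = comp_arcs (gen_arcs g) 2 (arity r) (tree_arcs r)"
  have m: "1 \<le> arity t" by (rule arity_ge_1)
  show ?case
  proof (cases "i \<le> arity l")
    case True
    have "tree_arcs (graft (Node g l r) i t) = tree_arcs (Node g (graft l i t) r)"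
      using True by simp
    also have "\<dots> = comp_arcs X 1 (arity l + arity t - 1)
          (comp_arcs (tree_arcs l) i (arity t) (tree_arcs t))"
      using True Node.prems by (simp only: tree_arcs.simps X_def arity_graft Node.IH(1))
    also have "\<dots> = comp_arcs (comp_arcs X 1 (arity l) (tree_arcs l)) i (arity t) (tree_arcs t)"
      using comp_arcs_assoc_seq[of 1 i "arity l" "arity t" "tree_arcs l" "tree_arcs t" X]
        True Node.prems m arcs_within_tree_arcs by simp
    finally show ?thesis by (simp only: tree_arcs.simps X_def)
  next
    case False
    define j where "j = i - arity l"
    have j: "1 \<le> j" "j \<le> arity r" "i = j + 1 + arity l - 1"
      using False Node.prems by (auto simp: j_def)
    have "tree_arcs (graft (Node g l r) i t) = tree_arcs (Node g l (graft r j t))"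
      using False by (simp add: j_def)
    also have "\<dots> = comp_arcs (comp_arcs (gen_arcs g) 2 (arity r + arity t - 1)
              (comp_arcs (tree_arcs r) j (arity t) (tree_arcs t))) 1 (arity l) (tree_arcs l)"
      using j by (simp only: tree_arcs.simps arity_graft Node.IH(2))
    also have "\<dots> = comp_arcs (comp_arcs X (j + 1) (arity t) (tree_arcs t))
          1 (arity l) (tree_arcs l)"
      using comp_arcs_assoc_seq[of 2 j "arity r" "arity t" "tree_arcs r" "tree_arcs t" "gen_arcs g"]
        j m arcs_within_tree_arcs by (simp add: X_def add.commute)
    also have "\<dots> = comp_arcs (comp_arcs X 1 (arity l) (tree_arcs l)) i (arity t) (tree_arcs t)"
      using comp_arcs_assoc_par[of 1 "j + 1" "arity l" "arity t" "tree_arcs l" "tree_arcs t" X]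
        j m arity_ge_1 arcs_within_tree_arcs by simp
    finally show ?thesis by (simp only: tree_arcs.simps X_def)
  qed
qed

lemma feval_graft:
  "1 \<le> i \<Longrightarrow> i \<le> arity s \<Longrightarrow> feval (graft s i t) = bnc_comp (feval s) i (feval t)"
  by (simp only: feval_eq_blue_bnc bnc_comp_blue_bnc[OF tree_arcs_base] tree_arcs_graft arity_graft)

lemma tree_arcs_Node_E:
  assumes "(x, y) \<in> tree_arcs (Node g l r)"
  obtains (base) "x = 1" "y = arity l + arity r + 1"
  | (left) "(x, y) \<in> tree_arcs l" "(x, y) \<noteq> (1, arity l + 1)"
      "1 \<le> x" "x < y" "y \<le> arity l + 1"
  | (right) a b where "(a, b) \<in> tree_arcs r" "(a, b) \<noteq> (1, arity r + 1)"
      "x = a + arity l" "y = b + arity l" "1 \<le> a" "a < b" "b \<le> arity r + 1"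
  | (GA_left) "g = GA" "x = 1" "y = arity l + 1"
  | (GA_right) "g = GA" "x = arity l + 1" "y = arity l + arity r + 1"
proof -
  have L: "arcs_within (arity l) (tree_arcs l)" and R: "arcs_within (arity r) (tree_arcs r)"
    by (rule arcs_within_tree_arcs)+
  from assms have
    "(x, y) \<in> comp_arcs (comp_arcs (gen_arcs g) 2 (arity r) (tree_arcs r)) 1 (arity l) (tree_arcs l)"
    by simp
  then show thesis
  proof (cases rule: comp_arcs_E)
    case (outer c d)
    note cd = this
    from cd(1) show thesis
    proof (cases rule: comp_arcs_E)
      case (outer e f)
      then have "(e, f) = (1, 3)" using cd(2) by (cases g) (auto simp: lift_def)
      then show thesis using base outer cd by (simp add: lift_def add.commute)
    next
      case (inner e f)
      then show thesis using right[OF inner(1,2)] cd arcs_withinD[OF R inner(1)]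
        by (auto simp: lift_def add.commute)
    next
      case new
      then have "g = GA" by (cases g) auto
      then show thesis using GA_right new cd by (simp add: lift_def add.commute)
    qed
  next
    case (inner c d)
    then show thesis using left arcs_withinD[OF L inner(1)] by simp
  next
    case new
    from new(1) show thesis
    proof (cases rule: comp_arcs_E)
      case (outer e f)
      then have "g = GA" using arity_pos[of r] by (cases g) (auto simp: lift_def)
      then show thesis using GA_left new by simp
    next
      case (inner e f)
      then show thesis using arcs_withinD[OF R inner(1)] by simp
    qed simp
  qed
qed

lemma tree_arcs_Node_I_left:
  "(a, b) \<in> tree_arcs l \<Longrightarrow> (a, b) \<noteq> (1, arity l + 1) \<Longrightarrow> (a, b) \<in> tree_arcs (Node g l r)"
  using comp_arcs_I_inner[of a b "tree_arcs l" "arity l" 1] by simp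

lemma tree_arcs_Node_I_right:
  assumes "(a, b) \<in> tree_arcs r" "(a, b) \<noteq> (1, arity r + 1)"
  shows "(a + arity l, b + arity l) \<in> tree_arcs (Node g l r)"
proof -
  have ab: "1 \<le> a" "a < b" using arcs_withinD[OF arcs_within_tree_arcs assms(1)] by auto
  have "(a + 2 - 1, b + 2 - 1) \<in> comp_arcs (gen_arcs g) 2 (arity r) (tree_arcs r)"
    using assms by (rule comp_arcs_I_inner)
  then have "(lift 1 (arity l) (a + 1), lift 1 (arity l) (b + 1)) \<in> tree_arcs (Node g l r)"
    using ab by (simp, intro comp_arcs_I_outer) simp_all
  then show ?thesis using ab by (simp add: lift_def)
qed

lemma tree_arcs_Node_I_GA:
  "(1, arity l + 1) \<in> tree_arcs (Node GA l r)"
  "(arity l + 1, arity l + arity r + 1) \<in> tree_arcs (Node GA l r)"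
proof -
  have "(lift 2 (arity r) 1, lift 2 (arity r) 2)
         \<in> comp_arcs (gen_arcs GA) 2 (arity r) (tree_arcs r)"
    by (rule comp_arcs_I_outer) simp_all
  then have "(1, 2) \<in> comp_arcs (gen_arcs GA) 2 (arity r) (tree_arcs r)" by (simp add: lift_def)
  then have "(1, 1 + arity l) \<in> tree_arcs (Node GA l r)"
    unfolding tree_arcs.simps by (intro comp_arcs_I_new) (simp only: one_add_one)
  then show "(1, arity l + 1) \<in> tree_arcs (Node GA l r)" by (simp add: add.commute)
  have "(2, 2 + arity r) \<in> comp_arcs (gen_arcs GA) 2 (arity r) (tree_arcs r)"
    by (rule comp_arcs_I_new) simp
  then have "(lift 1 (arity l) 2, lift 1 (arity l) (2 + arity r)) \<in> tree_arcs (Node GA l r)"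
    unfolding tree_arcs.simps by (rule comp_arcs_I_outer) simp
  then show "(arity l + 1, arity l + arity r + 1) \<in> tree_arcs (Node GA l r)"
    by (simp add: lift_def add_ac)
qed

declare tree_arcs.simps(2) [simp del]

lemma tree_arcs_noncrossing:
  "e \<in> tree_arcs t \<Longrightarrow> f \<in> tree_arcs t \<Longrightarrow> \<not> crossing e f"
proof (induction t arbitrary: e f)
  case Leaf then show ?case by (auto simp: crossing_def)
next
  case (Node g l r)
  obtain a b c d where ef: "e = (a, b)" "f = (c, d)" by (cases e, cases f)
  have "1 \<le> arity l" "1 \<le> arity r" by (rule arity_ge_1)+
  moreover have crossing_l: False if "(a, b) \<in> tree_arcs l" "(c, d) \<in> tree_arcs l"
      "a < c" "c < b" "b < d" for a b c d
    using Node.IH(1) that by (auto simp: crossing_def)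
  moreover have crossing_r: False if "(a, b) \<in> tree_arcs r" "(c, d) \<in> tree_arcs r"
      "a < c" "c < b" "b < d" for a b c d
    using Node.IH(2) that by (auto simp: crossing_def)
  ultimately show ?case using Node.prems unfolding ef crossing_def
    by (elim tree_arcs_Node_E) (auto dest: crossing_l crossing_r)
qed

section \<open>The image of the evaluation map\<close>

lemma is_bnc_feval: "is_bnc (feval t)"
proof (cases t)
  case (Node g l r)
  have "2 \<le> arity t" using Node arity_ge_1[of l] arity_ge_1[of r] by simp
  moreover have "\<forall>e \<in> tree_arcs t. is_arc (arity t) e"
    using arcs_within_tree_arcs[of t] by (auto simp: arcs_within_def is_arc_def)
  ultimately show ?thesis
    using tree_arcs_noncrossing[of _ t] by (simp add: is_bnc_def feval_eq_blue_bnc blue_bnc_def)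
qed (simp add: is_bnc_def)

lemma arity_gtree: "arity (gtree g) = 2"
  by (simp add: gtree_def)

lemma tree_arcs_gtree: "tree_arcs (gtree g) = gen_arcs g"
  by (simp only: gtree_def tree_arcs.simps arity.simps comp_arcs_unit_right)

lemma feval_gtree: "feval (gtree g) = gen_bnc g"
  by (simp only: feval_eq_blue_bnc arity_gtree tree_arcs_gtree gen_bnc_eq_blue_bnc)

lemma bsize_feval: "bsize (feval t) = arity t"
  by (simp add: feval_eq_blue_bnc blue_bnc_def)

lemma feval_in_gen_sub: "feval t \<in> gen_sub"
proof (induction t)
  case Leaf then show ?case by (simp add: gen_sub.unit)
next
  case (Node g l r)
  have gen: "gen_bnc g \<in> gen_sub" by (cases g) (simp_all add: gen_sub.gen_a gen_sub.gen_r)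
  have gen_is_bnc: "is_bnc (gen_bnc g)" "bsize (gen_bnc g) = 2"
    using is_bnc_feval[of "gtree g"] bsize_feval[of "gtree g"]
    by (simp_all add: feval_gtree arity_gtree)
  define X where "X = Node g Leaf r"
  have "feval X = bnc_comp (feval (gtree g)) 2 (feval r)"
    using feval_graft[of 2 "gtree g" r] by (simp add: X_def gtree_def del: feval.simps)
  then have X: "feval X = bnc_comp (gen_bnc g) 2 (feval r)" by (simp only: feval_gtree)
  have "bnc_comp (gen_bnc g) 2 (feval r) \<in> gen_sub"
    using gen Node.IH(2) gen_is_bnc is_bnc_feval by (intro gen_sub.comp) simp_all
  then have "bnc_comp (feval X) 1 (feval l) \<in> gen_sub"
    unfolding X[symmetric]
    using Node.IH(1) is_bnc_feval bsize_feval arity_ge_1 by (intro gen_sub.comp) simp_all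
  then show ?case by (simp only: X feval.simps)
qed

lemma gen_sub_in_range_feval: "C \<in> gen_sub \<Longrightarrow> C \<in> range feval"
proof (induction rule: gen_sub.induct)
  case unit then show ?case by (metis feval.simps(1) rangeI)
next
  case gen_a then show ?case by (metis feval_gtree gen_bnc.simps(1) rangeI)
next
  case gen_r then show ?case by (metis feval_gtree gen_bnc.simps(2) rangeI)
next
  case (comp C D i)
  then obtain s t where "C = feval s" "D = feval t" by auto
  with comp feval_graft[of i s t] have "bnc_comp C i D = feval (graft s i t)"
    by (simp add: feval_eq_blue_bnc blue_bnc_def)
  then show ?case by simp
qed

lemma fcong_imp_feval_eq: "fcong s t \<Longrightarrow> feval s = feval t"
proof (induction rule: fcong.induct)
  case rel
  have "tree_arcs (graft (gtree GR) i (gtree GR)) = {(1, 4)}" if "i = 1 \<or> i = 2" for i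
    using that by (auto simp: tree_arcs_graft arity_gtree tree_arcs_gtree comp_arcs_def lift_def)
  moreover have "arity (graft (gtree GR) i (gtree GR)) = 3" if "i = 1 \<or> i = 2" for i
    using that by (auto simp: arity_graft arity_gtree)
  ultimately show ?case by (simp add: feval_eq_blue_bnc)
next
  case (ctx_out s t i u) then show ?case by (simp add: feval_graft)
next
  case (ctx_in s t i u) then show ?case by (metis feval_graft)
qed simp_all

section \<open>Normal forms\<close>

fun root_is_GR :: "ftree \<Rightarrow> bool" where
  "root_is_GR Leaf = False"
| "root_is_GR (Node g l r) = (g = GR)"

fun normal :: "ftree \<Rightarrow> bool" where
  "normal Leaf = True"
| "normal (Node g l r) = (normal l \<and> normal r \<and> (g = GR \<longrightarrow> \<not> root_is_GR l))"

lemma fcong_Node_left: "fcong l l' \<Longrightarrow> fcong (Node g l r) (Node g l' r)"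
  using fcong.ctx_out[of l l' 1 "Node g Leaf r"] by simp

lemma fcong_Node_right: "fcong r r' \<Longrightarrow> fcong (Node g l r) (Node g l r')"
  using fcong.ctx_out[of r r' "arity l + 1" "Node g l Leaf"] by simp

lemma fcong_GR_assoc: "fcong (Node GR (Node GR a b) c) (Node GR a (Node GR b c))"
proof -
  have "fcong (Node GR (Node GR Leaf Leaf) Leaf) (Node GR Leaf (Node GR Leaf Leaf))"
    using fcong.rel by (simp add: gtree_def)
  then have "fcong (Node GR (Node GR Leaf Leaf) c) (Node GR Leaf (Node GR Leaf c))"
    using fcong.ctx_in[of _ _ 3 c] by fastforce
  then have "fcong (Node GR (Node GR Leaf b) c) (Node GR Leaf (Node GR b c))"
    using fcong.ctx_in[of _ _ 2 b] arity_ge_1[of c] by fastforce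
  then show ?thesis
    using fcong.ctx_in[of _ _ 1 a] arity_ge_1[of b] arity_ge_1[of c] by fastforce
qed

lemma normal_form_GR_exists:
  "normal l \<Longrightarrow> normal r \<Longrightarrow> \<exists>n. normal n \<and> fcong (Node GR l r) n"
proof (induction l arbitrary: r)
  case Leaf then show ?case by (intro exI[of _ "Node GR Leaf r"]) (simp add: fcong.refl)
next
  case (Node g a b)
  show ?case
  proof (cases g)
    case GA then show ?thesis using Node.prems
      by (intro exI[of _ "Node GR (Node g a b) r"]) (simp add: fcong.refl)
  next
    case GR
    with Node.prems have "normal a" "normal b" "\<not> root_is_GR a" by auto
    with Node.IH(2)[of r] Node.prems(2) obtain u where "normal u" "fcong (Node GR b r) u" by blast
    then have "normal (Node GR a u)" "fcong (Node GR (Node GR a b) r) (Node GR a u)"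
      using \<open>normal a\<close> \<open>\<not> root_is_GR a\<close> fcong.trans[OF fcong_GR_assoc fcong_Node_right] by auto
    then show ?thesis using GR by blast
  qed
qed

lemma normal_form_exists: "\<exists>n. normal n \<and> fcong t n"
proof (induction t)
  case Leaf then show ?case by (intro exI[of _ Leaf]) (simp add: fcong.refl)
next
  case (Node g l r)
  then obtain l' r' where "normal l'" "fcong l l'" "normal r'" "fcong r r'" by blast
  then have congr: "fcong (Node g l r) (Node g l' r')"
    using fcong.trans fcong_Node_left fcong_Node_right by blast
  show ?case
  proof (cases g)
    case GA then show ?thesis using congr \<open>normal l'\<close> \<open>normal r'\<close>
      by (intro exI[of _ "Node g l' r'"]) simp
  next
    case GR
    then obtain n where "normal n" "fcong (Node g l' r') n"
      using normal_form_GR_exists \<open>normal l'\<close> \<open>normal r'\<close> by blast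
    then show ?thesis using congr fcong.trans by blast
  qed
qed

section \<open>Normal trees are determined by their arcs\<close>

lemma tree_arcs_Node_from_first:
  assumes "(1, k) \<in> tree_arcs (Node g l r)" "k < arity l + arity r + 1"
  shows "k \<le> arity l + 1 \<and> (g = GR \<longrightarrow> (1, k) \<in> tree_arcs l \<and> k \<noteq> arity l + 1)"
  using assms(1) by (cases rule: tree_arcs_Node_E) (use assms(2) arity_ge_1[of l] in auto)

lemma tree_arcs_Node_to_last:
  assumes "(k, arity l + arity r + 1) \<in> tree_arcs (Node g l r)" "1 < k"
  shows "arity l + 1 \<le> k \<and> (g = GR \<longrightarrow> arity l + 2 \<le> k)"
  using assms(1) by (cases rule: tree_arcs_Node_E) (use assms(2) arity_ge_1[of r] in auto)

lemma tree_arcs_Node_from_left: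
  assumes "(a, k) \<in> tree_arcs (Node g l r)" "1 < a" "a \<le> arity l"
  shows "k \<le> arity l + 1"
  using assms(1) by (cases rule: tree_arcs_Node_E) (use assms(2,3) in auto)

lemma tree_arcs_left_child:
  "tree_arcs l = insert (1, arity l + 1) {z \<in> tree_arcs (Node g l r). snd z \<le> arity l + 1}"
proof (intro set_eqI iffI)
  fix z assume z: "z \<in> tree_arcs l"
  obtain x y where xy: "z = (x, y)" by (cases z)
  have "y \<le> arity l + 1" using arcs_withinD[OF arcs_within_tree_arcs z[unfolded xy]] by simp
  then show "z \<in> insert (1, arity l + 1) {z \<in> tree_arcs (Node g l r). snd z \<le> arity l + 1}"
    using tree_arcs_Node_I_left[of x y l g r] z xy by auto
next
  fix z assume z: "z \<in> insert (1, arity l + 1) {z \<in> tree_arcs (Node g l r). snd z \<le> arity l + 1}"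
  obtain x y where xy: "z = (x, y)" by (cases z)
  show "z \<in> tree_arcs l"
  proof (cases "z = (1, arity l + 1)")
    case False
    then have "(x, y) \<in> tree_arcs (Node g l r)" "y \<le> arity l + 1" using z xy by auto
    then show ?thesis unfolding xy
      by (cases rule: tree_arcs_Node_E) (use arity_ge_1[of r] tree_arcs_base[of l] in auto)
  qed (use tree_arcs_base[of l] in simp)
qed

lemma tree_arcs_right_child:
  "tree_arcs r = insert (1, arity r + 1)
     {(c, d). (c + arity l, d + arity l) \<in> tree_arcs (Node g l r) \<and> 1 \<le> c}"
proof (intro set_eqI iffI)
  fix z assume z: "z \<in> tree_arcs r"
  obtain x y where xy: "z = (x, y)" by (cases z)
  have "1 \<le> x" using arcs_withinD[OF arcs_within_tree_arcs z[unfolded xy]] by simp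
  then show "z \<in> insert (1, arity r + 1)
      {(c, d). (c + arity l, d + arity l) \<in> tree_arcs (Node g l r) \<and> 1 \<le> c}"
    using tree_arcs_Node_I_right[of x y r l g] z xy by auto
next
  fix z assume z: "z \<in> insert (1, arity r + 1)
     {(c, d). (c + arity l, d + arity l) \<in> tree_arcs (Node g l r) \<and> 1 \<le> c}"
  obtain x y where xy: "z = (x, y)" by (cases z)
  show "z \<in> tree_arcs r"
  proof (cases "z = (1, arity r + 1)")
    case False
    then have "(x + arity l, y + arity l) \<in> tree_arcs (Node g l r)" "1 \<le> x" using z xy by auto
    then show ?thesis unfolding xy
      by (cases rule: tree_arcs_Node_E) (use False xy arity_ge_1[of l] tree_arcs_base[of r] in auto)
  qed (use tree_arcs_base[of r] in simp)
qed

text \<open>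
  An \<open>a\<close>-root is recognised by a vertex \<open>k\<close> joined to both the first and the last
  vertex, and then \<open>k - 1\<close> is the arity of the left subtree; below an \<open>r\<close>-root no such
  vertex exists.
\<close>

lemma GA_root_determined:
  assumes arcs: "tree_arcs (Node GA l r) = tree_arcs (Node g l' r')"
    and arity: "arity l + arity r = arity l' + arity r'"
  shows "g = GA \<and> arity l = arity l'"
proof -
  have "(1, arity l + 1) \<in> tree_arcs (Node g l' r')"
    "(arity l + 1, arity l' + arity r' + 1) \<in> tree_arcs (Node g l' r')"
    using tree_arcs_Node_I_GA[of l r] arcs arity by simp_all
  with tree_arcs_Node_from_first[of "arity l + 1" g l' r']
       tree_arcs_Node_to_last[of "arity l + 1" l' r' g]
  show ?thesis using arity arity_ge_1[of l] arity_ge_1[of r] by (cases g) auto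
qed

lemma root_label_determined:
  assumes "tree_arcs (Node g l r) = tree_arcs (Node g' l' r')"
    and "arity l + arity r = arity l' + arity r'"
  shows "g = g'"
  using GA_root_determined[of l r g' l' r'] GA_root_determined[of l' r' g l r] assms
  by (cases g; cases g') auto

lemma GR_Leaf_no_short_arc:
  "(1, k) \<in> tree_arcs (Node GR Leaf r) \<Longrightarrow> k = arity r + 2"
  using tree_arcs_Node_from_first[of k GR Leaf r] arcs_withinD[OF arcs_within_tree_arcs, of 1 k]
  by fastforce

lemma tree_arcs_Node_GA_left:
  "(1, arity ll + 1) \<in> tree_arcs (Node g (Node GA ll lr) r)"
  "(arity ll + 1, arity ll + arity lr + 1) \<in> tree_arcs (Node g (Node GA ll lr) r)"
  by (rule tree_arcs_Node_I_left[OF tree_arcs_Node_I_GA(1)], use arity_ge_1[of lr] in simp)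
    (rule tree_arcs_Node_I_left[OF tree_arcs_Node_I_GA(2)], simp)

lemma GR_GA_split_le:
  assumes arcs: "tree_arcs (Node GR (Node GA ll lr) r) = tree_arcs (Node GR (Node GA ll' lr') r')"
    and arity: "arity ll + arity lr + arity r = arity ll' + arity lr' + arity r'"
  shows "arity ll \<le> arity ll'"
proof -
  have "(1, arity ll + 1) \<in> tree_arcs (Node GR (Node GA ll' lr') r')"
    using tree_arcs_Node_GA_left(1)[of ll GR lr r] arcs by simp
  moreover have "arity ll + 1 < arity (Node GA ll' lr') + arity r' + 1"
    using arity arity_ge_1[of lr] arity_ge_1[of r] by simp
  ultimately have "(1, arity ll + 1) \<in> tree_arcs (Node GA ll' lr')"
    "arity ll + 1 < arity ll' + arity lr' + 1"
    using tree_arcs_Node_from_first[of "arity ll + 1" GR] by fastforce+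
  then show ?thesis using tree_arcs_Node_from_first[of "arity ll + 1" GA ll' lr'] by simp
qed

lemma GR_GA_inner_le:
  assumes arcs: "tree_arcs (Node GR (Node GA ll lr) r) = tree_arcs (Node GR (Node GA ll' lr') r')"
    and "arity ll = arity ll'"
  shows "arity lr \<le> arity lr'"
proof -
  have "(arity ll + 1, arity ll + arity lr + 1) \<in> tree_arcs (Node GR (Node GA ll' lr') r')"
    using tree_arcs_Node_GA_left(2)[of ll lr GR r] arcs by simp
  from tree_arcs_Node_from_left[OF this] show ?thesis
    using assms(2) arity_ge_1[of ll] arity_ge_1[of lr'] by simp
qed

lemma GR_split_determined:
  assumes "\<not> root_is_GR l" "\<not> root_is_GR l'"
    and arcs: "tree_arcs (Node GR l r) = tree_arcs (Node GR l' r')"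
    and arity: "arity l + arity r = arity l' + arity r'"
  shows "arity l = arity l'"
proof -
  have Leaf_or_GA: "u = Leaf \<or> (\<exists>ul ur. u = Node GA ul ur)" if "\<not> root_is_GR u" for u
    using that by (cases u rule: root_is_GR.cases) (auto intro: gen.exhaust)
  have GA_neq_Leaf: "tree_arcs (Node GR (Node GA ll lr) r) \<noteq> tree_arcs (Node GR Leaf r')"
    if "arity ll + arity lr + arity r = 1 + arity r'" for ll lr r r'
    using GR_Leaf_no_short_arc[of "arity ll + 1" r'] tree_arcs_Node_GA_left(1)[of ll GR lr r] that
      arity_ge_1[of lr] arity_ge_1[of r] by auto
  show ?thesis
    using Leaf_or_GA[OF assms(1)] Leaf_or_GA[OF assms(2)]
  proof (elim disjE exE)
    fix ll lr ll' lr' assume l: "l = Node GA ll lr" and l': "l' = Node GA ll' lr'"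
    have "arity ll = arity ll'"
      using GR_GA_split_le[of ll lr r ll' lr' r'] GR_GA_split_le[of ll' lr' r' ll lr r]
        arcs arity l l' by fastforce
    with GR_GA_inner_le[of ll lr r ll' lr' r'] GR_GA_inner_le[of ll' lr' r' ll lr r]
    show ?thesis using arcs l l' by fastforce
  qed (use GA_neq_Leaf arcs arity in \<open>auto simp: eq_commute[of "tree_arcs (Node GR Leaf r)"]\<close>)
qed

lemma normal_eq_if_tree_arcs_eq:
  "normal s \<Longrightarrow> normal t \<Longrightarrow> arity s = arity t \<Longrightarrow> tree_arcs s = tree_arcs t \<Longrightarrow> s = t"
proof (induction s arbitrary: t)
  case Leaf
  show ?case
  proof (cases t)
    case (Node g l r)
    then have "2 \<le> arity t" using arity_ge_1[of l] arity_ge_1[of r] by simp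
    with Leaf.prems show ?thesis by simp
  qed simp
next
  case (Node g l r)
  then obtain g' l' r' where t: "t = Node g' l' r'"
    using arity_ge_1[of l] arity_ge_1[of r] by (cases t) auto
  have arcs: "tree_arcs (Node g l r) = tree_arcs (Node g' l' r')"
    and arity: "arity l + arity r = arity l' + arity r'" using Node.prems t by simp_all
  have "g = g'" using root_label_determined[OF arcs arity] .
  moreover have "arity l = arity l'"
  proof (cases g)
    case GA then show ?thesis using GA_root_determined arcs arity by blast
  next
    case GR then show ?thesis
      using GR_split_determined Node.prems(1,2) t \<open>g = g'\<close> arcs arity by auto
  qed
  moreover have "normal l" "normal r" "normal l'" "normal r'" using Node.prems(1,2) t by simp_all
  moreover have "tree_arcs l = tree_arcs l'"
    using tree_arcs_left_child[of l g r] tree_arcs_left_child[of l' g' r'] arcs \<open>arity l = arity l'\<close>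
    by simp
  moreover have "tree_arcs r = tree_arcs r'" "arity r = arity r'"
    using tree_arcs_right_child[of r l g] tree_arcs_right_child[of r' l' g'] arcs arity
      \<open>arity l = arity l'\<close> by simp_all
  ultimately show ?case using Node.IH t by blast
qed

lemma feval_eq_imp_fcong:
  assumes "feval s = feval t"
  shows "fcong s t"
proof -
  obtain ns nt where ns: "normal ns" "fcong s ns" and nt: "normal nt" "fcong t nt"
    using normal_form_exists by meson
  have "feval ns = feval nt"
    using assms fcong_imp_feval_eq[OF ns(2)] fcong_imp_feval_eq[OF nt(2)] by simp
  then have "ns = nt"
    using normal_eq_if_tree_arcs_eq[OF ns(1) nt(1)] by (simp add: feval_eq_blue_bnc blue_bnc_def)
  then show ?thesis using ns(2) nt(2) fcong.sym fcong.trans by metis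
qed

theorem theorem3p18:
  shows "(\<forall>s t i. 1 \<le> i \<and> i \<le> arity s \<longrightarrow>
            feval (graft s i t) = bnc_comp (feval s) i (feval t))
       \<and> feval ` UNIV = gen_sub
       \<and> (\<forall>s t. feval s = feval t \<longleftrightarrow> fcong s t)"
proof (intro conjI allI impI)
  show "feval (graft s i t) = bnc_comp (feval s) i (feval t)" if "1 \<le> i \<and> i \<le> arity s" for s t i
    using feval_graft that by blast
  show "feval ` UNIV = gen_sub"
    using feval_in_gen_sub gen_sub_in_range_feval by blast
  show "feval s = feval t \<longleftrightarrow> fcong s t" for s t
    using feval_eq_imp_fcong fcong_imp_feval_eq by blast
qed

end
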